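(* Let $D$ be a $3$-dicritical digraph. Then $D$ does not contain $O_5$ as a (not necessarily induced) subdigraph.
   Context: A $2$-dicolouring is a map to $\{1,2\}$ whose colour classes induce acyclic subdigraphs (digons count as cycles). $D$ is $3$-dicritical if $D$ has no $2$-dicolouring but every proper subdigraph has one. $O_5$ is the oriented graph on vertices $u,v,x,y,z$ with arcs $xy,yz,zx$ (a directed triangle), $ux,uy,uz$, $xv,yv,zv$, and $uv$. "Contains as a subdigraph" means up to isomorphism. *)

theory Defs
  imports Main
begin

definition digraph :: "'a set \<Rightarrow> ('a \<times> 'a) set \<Rightarrow> bool" where
  "digraph V A \<longleftrightarrow> finite V \<and> A \<subseteq> V \<times> V \<and> (\<forall>v. (v, v) \<notin> A)"

text \<open>A 2-dicolouring: each colour class induces an acyclic subdigraph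
  (a digon is a directed cycle of length 2).\<close>
definition dicolouring2 :: "'a set \<Rightarrow> ('a \<times> 'a) set \<Rightarrow> ('a \<Rightarrow> nat) \<Rightarrow> bool" where
  "dicolouring2 V A c \<longleftrightarrow> (\<forall>v\<in>V. c v \<in> {1, 2}) \<and>
     (\<forall>i\<in>{1::nat, 2}. acyclic (A \<inter> ({v\<in>V. c v = i} \<times> {v\<in>V. c v = i})))"

definition two_dicolourable :: "'a set \<Rightarrow> ('a \<times> 'a) set \<Rightarrow> bool" where
  "two_dicolourable V A \<longleftrightarrow> (\<exists>c. dicolouring2 V A c)"

definition subdigraph :: "'a set \<Rightarrow> ('a \<times> 'a) set \<Rightarrow> 'a set \<Rightarrow> ('a \<times> 'a) set \<Rightarrow> bool" where
  "subdigraph V' A' V A \<longleftrightarrow> V' \<subseteq> V \<and> A' \<subseteq> A \<and> A' \<subseteq> V' \<times> V'"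

definition dicritical3 :: "'a set \<Rightarrow> ('a \<times> 'a) set \<Rightarrow> bool" where
  "dicritical3 V A \<longleftrightarrow> digraph V A \<and> \<not> two_dicolourable V A \<and>
     (\<forall>V' A'. subdigraph V' A' V A \<and> (V', A') \<noteq> (V, A) \<longrightarrow> two_dicolourable V' A')"

definition contains_O5 :: "'a set \<Rightarrow> ('a \<times> 'a) set \<Rightarrow> bool" where
  "contains_O5 V A \<longleftrightarrow> (\<exists>u v x y z. u \<in> V \<and> v \<in> V \<and> x \<in> V \<and> y \<in> V \<and> z \<in> V \<and>
     distinct [u, v, x, y, z] \<and>
     (x, y) \<in> A \<and> (y, z) \<in> A \<and> (z, x) \<in> A \<and>
     (u, x) \<in> A \<and> (u, y) \<in> A \<and> (u, z) \<in> A \<and>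
     (x, v) \<in> A \<and> (y, v) \<in> A \<and> (z, v) \<in> A \<and> (u, v) \<in> A)"

end

theory Submission
  imports Defs
begin

text \<open>Delete the arc uv from a copy of O_5 inside a 3-dicritical digraph and 2-dicolour
  what remains. The directed triangle xyz cannot be monochromatic, so it meets both colours;
  hence if u and v receive the same colour, some w among x, y, z has that colour too, and the
  path u w v inside that colour class shows that putting uv back creates no monochromatic
  cycle. So the whole digraph would be 2-dicolourable, which is absurd.\<close>

lemma dicritical3_delete_arc_two_dicolourable:
  assumes "dicritical3 V A" and "e \<in> A"
  shows "two_dicolourable V (A - {e})"
proof -
  have "subdigraph V (A - {e}) V A"
    using assms(1) unfolding dicritical3_def digraph_def subdigraph_def by blast
  moreover have "(V, A - {e}) \<noteq> (V, A)"
    using assms(2) by blast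
  ultimately show ?thesis
    using assms(1) unfolding dicritical3_def by blast
qed

lemma dicolouring2_triangle_meets_colour:
  assumes c: "dicolouring2 V A c"
    and in_V: "x \<in> V" "y \<in> V" "z \<in> V"
    and arcs: "(x, y) \<in> A" "(y, z) \<in> A" "(z, x) \<in> A"
    and i: "i \<in> {1, 2}"
  shows "c x = i \<or> c y = i \<or> c z = i"
proof (rule ccontr)
  assume "\<not> (c x = i \<or> c y = i \<or> c z = i)"
  with c in_V i have mono: "c x = 3 - i" "c y = 3 - i" "c z = 3 - i"
    unfolding dicolouring2_def by auto
  define R where "R = A \<inter> ({v\<in>V. c v = 3 - i} \<times> {v\<in>V. c v = 3 - i})"
  have "(x, y) \<in> R" "(y, z) \<in> R" "(z, x) \<in> R"
    using in_V arcs mono unfolding R_def by auto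
  then have "(x, x) \<in> R\<^sup>+"
    by (meson trancl.r_into_trancl trancl.trancl_into_trancl)
  moreover have "acyclic R"
    using c i unfolding dicolouring2_def R_def by auto
  ultimately show False
    unfolding acyclic_def by blast
qed

lemma dicolouring2_insert_arc_via_path:
  assumes c: "dicolouring2 V A c"
    and path: "c u = c v \<Longrightarrow> \<exists>w\<in>V. c w = c u \<and> (u, w) \<in> A \<and> (w, v) \<in> A"
  shows "dicolouring2 V (insert (u, v) A) c"
  unfolding dicolouring2_def
proof (intro conjI ballI)
  show "c v' \<in> {1, 2}" if "v' \<in> V" for v'
    using c that unfolding dicolouring2_def by blast
next
  fix i :: nat
  assume i: "i \<in> {1, 2}"
  define C where "C = {v\<in>V. c v = i}"
  define R where "R = A \<inter> (C \<times> C)"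
  have "acyclic R"
    using c i unfolding dicolouring2_def R_def C_def by blast
  show "acyclic (insert (u, v) A \<inter> (C \<times> C))"
  proof (cases "u \<in> C \<and> v \<in> C")
    case False
    then have "insert (u, v) A \<inter> (C \<times> C) = R"
      unfolding R_def by blast
    with \<open>acyclic R\<close> show ?thesis by simp
  next
    case True
    then obtain w where "w \<in> C" "(u, w) \<in> A" "(w, v) \<in> A"
      using path unfolding C_def by auto
    with True have "(u, v) \<in> R\<^sup>+"
      unfolding R_def by (meson IntI SigmaI trancl.r_into_trancl trancl.trancl_into_trancl)
    with \<open>acyclic R\<close> have "(v, u) \<notin> R\<^sup>*"
      unfolding acyclic_def by (blast intro: trancl_rtrancl_trancl)
    moreover have "insert (u, v) A \<inter> (C \<times> C) = insert (u, v) R"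
      using True unfolding R_def by blast
    ultimately show ?thesis
      using \<open>acyclic R\<close> by simp
  qed
qed

theorem lemma15:
  fixes V :: "'a set" and A :: "('a \<times> 'a) set"
  assumes "dicritical3 V A"
  shows "\<not> contains_O5 V A"
proof
  assume "contains_O5 V A"
  then obtain u v x y z where
    in_V: "u \<in> V" "v \<in> V" "x \<in> V" "y \<in> V" "z \<in> V" and
    distinct: "distinct [u, v, x, y, z]" and
    arcs: "(x, y) \<in> A" "(y, z) \<in> A" "(z, x) \<in> A"
      "(u, x) \<in> A" "(u, y) \<in> A" "(u, z) \<in> A"
      "(x, v) \<in> A" "(y, v) \<in> A" "(z, v) \<in> A" "(u, v) \<in> A"
    unfolding contains_O5_def by blast
  define A' where "A' = A - {(u, v)}"
  obtain c where c: "dicolouring2 V A' c"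
    using dicritical3_delete_arc_two_dicolourable[OF assms arcs(10)]
    unfolding A'_def two_dicolourable_def by blast
  have arcs': "(x, y) \<in> A'" "(y, z) \<in> A'" "(z, x) \<in> A'"
      "(u, x) \<in> A'" "(u, y) \<in> A'" "(u, z) \<in> A'"
      "(x, v) \<in> A'" "(y, v) \<in> A'" "(z, v) \<in> A'"
    using arcs distinct unfolding A'_def by auto
  have "c u \<in> {1, 2}"
    using c in_V unfolding dicolouring2_def by blast
  then have "\<exists>w\<in>V. c w = c u \<and> (u, w) \<in> A' \<and> (w, v) \<in> A'"
    using dicolouring2_triangle_meets_colour[OF c in_V(3-5) arcs'(1-3)] in_V arcs' by blast
  then have "dicolouring2 V (insert (u, v) A') c"
    using dicolouring2_insert_arc_via_path[OF c] by blast
  moreover have "insert (u, v) A' = A"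
    using arcs(10) unfolding A'_def by blast
  ultimately show False
    using assms unfolding dicritical3_def two_dicolourable_def by auto
qed

end
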